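(* Let $n=p^2q^2$ with primes $3\le p<q$, and let $\mathcal{D}_{S_1},\mathcal{D}_{S_2}\subseteq\mathcal{D}_{[n]}\setminus\{n\}$ with $1\in\mathcal{D}_{S_1}\cap\mathcal{D}_{S_2}$. If $\mathrm{Spec}(\mathrm{ICG}(n,\mathcal{D}_{S_1}))=\mathrm{Spec}(\mathrm{ICG}(n,\mathcal{D}_{S_2}))$, then $\mathcal{D}_{S_1}=\mathcal{D}_{S_2}$.
   Context: Identify $\mathbb{Z}_n$ with $[n]=\{1,\dots,n\}$. For a divisor $d$ of $n$, $G_n(d)=\{j\in[n]:\gcd(j,n)=d\}$; $\mathcal{D}_{[n]}$ is the set of positive divisors of $n$. For $\mathcal{D}\subseteq\mathcal{D}_{[n]}\setminus\{n\}$, $\mathrm{ICG}(n,\mathcal{D})=\mathrm{Cay}(\mathbb{Z}_n,S)$ with $S=\bigcup_{d\in\mathcal{D}}G_n(d)$, and $\mathcal{D}=\mathcal{D}_S$. $\mathrm{Spec}$ is the multiset of adjacency eigenvalues. *)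

theory Defs
  imports "Jordan_Normal_Form.Char_Poly" "HOL-Library.Multiset"
begin

text \<open>Z_n identified with [n] = {1..n}; the element n plays the role of 0.\<close>

definition Gn :: "nat \<Rightarrow> nat \<Rightarrow> nat set" where
  "Gn n d = {j \<in> {1..n}. gcd j n = d}"

definition divisors_of :: "nat \<Rightarrow> nat set" where
  "divisors_of n = {d. 0 < d \<and> d dvd n}"

definition ICG_conn :: "nat \<Rightarrow> nat set \<Rightarrow> nat set" where
  "ICG_conn n D = (\<Union>d\<in>D. Gn n d)"

definition cay_adj :: "nat \<Rightarrow> nat set \<Rightarrow> complex mat" where
  "cay_adj n S = mat n n (\<lambda>(i, j). if (\<exists>s\<in>S. s mod n = (j + n - i) mod n) then 1 else 0)"

definition ICG_adj :: "nat \<Rightarrow> nat set \<Rightarrow> complex mat" where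
  "ICG_adj n D = cay_adj n (ICG_conn n D)"

definition Spec :: "complex mat \<Rightarrow> complex multiset" where
  "Spec A = Abs_multiset (\<lambda>x. order x (char_poly A))"

end

theory Submission
  imports Defs "HOL-Computational_Algebra.Primes"
begin

text \<open>
  ICG(n, D) is circulant, so its eigenvalue at j is the sum of \<omega>^(j m) over the m with
  gcd(m, n) \<in> D.  For n = p^2 q^2, write the indicator of gcd(m, n) \<in> D by inclusion-exclusion
  over the divisor lattice, i.e. through the mixed differences y(i, k) of
  x(i, k) = [n / (p^i q^k) \<in> D].  The Fourier transform of the indicator of the multiples of
  n / e is e times the indicator of the multiples of e, so the eigenvalue at j is the sum of
  y(i, k) p^i q^k over i \<le> a, k \<le> b, where a and b are the multiplicities of p and q in j,
  capped at 2.

  Modulo q this only depends on a, and the classes a = 0, 1, 2 have sizes n(1 - 1/p),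
  n(1/p - 1/p^2) and n/p^2, which are superincreasing for p \<ge> 3.  Hence the spectrum determines
  three residues mod q, and symmetrically three residues mod p.  Together with the largest
  eigenvalue (the degree, at j = 0) and the smallness of the y(i, k), these congruences force the
  indicator arrays of D1 and D2 to agree.
\<close>

section \<open>Roots of unity and the spectrum of circulant matrices\<close>

definition root_unity :: "nat \<Rightarrow> int \<Rightarrow> complex" where
  "root_unity n t = cis (2 * pi * of_int t / of_nat n)"

lemma root_unity_add: "root_unity n (a + b) = root_unity n a * root_unity n b"
  unfolding root_unity_def by (simp add: cis_mult add_divide_distrib algebra_simps)

lemma root_unity_0 [simp]: "root_unity n 0 = 1"
  by (simp add: root_unity_def)

lemma root_unity_power: "root_unity n t ^ k = root_unity n (t * int k)"
  by (induction k) (simp_all add: root_unity_add[symmetric] algebra_simps)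

lemma root_unity_multiple:
  assumes "n > 0"
  shows "root_unity n (int n * k) = 1"
proof -
  have "cis (2 * pi * real_of_int k) = 1"
    by (rule cis_multiple_2pi) simp
  then show ?thesis
    unfolding root_unity_def using assms by (simp add: mult.assoc)
qed

lemma root_unity_mod:
  assumes "n > 0"
  shows "root_unity n (a mod int n) = root_unity n a"
proof -
  have "root_unity n a = root_unity n (a mod int n) * root_unity n (int n * (a div int n))"
    by (simp flip: root_unity_add)
  then show ?thesis
    using root_unity_multiple[OF assms] by simp
qed

lemma root_unity_eq_1_iff:
  assumes "n > 0"
  shows "root_unity n t = 1 \<longleftrightarrow> int n dvd t"
proof
  assume "root_unity n t = 1"
  then have "cos (2 * pi * of_int t / of_nat n) = 1"
    unfolding root_unity_def by (metis cis.sel(1) one_complex.sel(1))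
  then obtain k :: int where "2 * pi * of_int t / of_nat n = real_of_int k * 2 * pi"
    using cos_one_2pi_int by blast
  then have "real_of_int t = real_of_int k * real n"
    using assms by (simp add: field_simps)
  then have "t = k * int n"
    by (metis of_int_eq_iff of_int_mult of_int_of_nat_eq)
  then show "int n dvd t" by simp
qed (use root_unity_multiple[OF assms] in auto)

lemma sum_root_unity:
  assumes "n > 0"
  shows "(\<Sum>k<n. root_unity n (t * int k)) = (if int n dvd t then of_nat n else 0)"
proof (cases "int n dvd t")
  case True
  then show ?thesis
    using root_unity_multiple[OF assms] by (auto simp: mult.assoc)
next
  case False
  have "(\<Sum>k<n. root_unity n (t * int k)) = (\<Sum>k<n. root_unity n t ^ k)"
    by (simp add: root_unity_power)
  also have "\<dots> = 0"
  proof -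
    have "root_unity n t ^ n = 1"
      using root_unity_multiple[OF assms, of t] by (simp add: root_unity_power mult.commute)
    moreover have "root_unity n t \<noteq> 1"
      using False root_unity_eq_1_iff[OF assms] by simp
    ultimately show ?thesis
      by (simp add: geometric_sum)
  qed
  finally show ?thesis
    using False by simp
qed

lemma root_unity_cong:
  assumes "n > 0" "a mod n = b mod n"
  shows "root_unity n (int a * t) = root_unity n (int b * t)"
proof -
  have "(int a * t) mod int n = (int b * t) mod int n"
    by (metis assms(2) mod_mult_left_eq of_nat_mod)
  then show ?thesis
    by (metis root_unity_mod[OF assms(1)])
qed

lemma root_unity_scale:
  assumes "e > 0"
  shows "root_unity (e * N) (int e * t) = root_unity N t"
  unfolding root_unity_def using assms by (simp add: field_simps)

lemma order_prod_list_linear: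
  fixes xs :: "complex list"
  shows "order x (\<Prod>a\<leftarrow>xs. [:-a, 1:]) = count (mset xs) x"
proof (induction xs)
  case (Cons a xs)
  have "(\<Prod>a\<leftarrow>xs. [:-a, 1:]) \<noteq> (0 :: complex poly)"
    by (simp add: prod_list_zero_iff image_iff)
  then have "[:-a, 1:] * (\<Prod>a\<leftarrow>xs. [:-a, 1:]) \<noteq> 0"
    by (metis mult_eq_0_iff pCons_eq_0_iff zero_neq_one)
  then have "order x ([:-a, 1:] * (\<Prod>a\<leftarrow>xs. [:-a, 1:]))
      = order x [:-a, 1:] + order x (\<Prod>a\<leftarrow>xs. [:-a, 1:])"
    by (rule order_mult)
  then show ?case
    using Cons.IH by (simp add: order_linear')
qed (simp add: order_0I)

definition dft_mat :: "nat \<Rightarrow> complex mat" where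
  "dft_mat n = mat n n (\<lambda>(i, j). root_unity n (int i * int j))"

definition idft_mat :: "nat \<Rightarrow> complex mat" where
  "idft_mat n = mat n n (\<lambda>(i, j). root_unity n (- (int i * int j)) / of_nat n)"

lemma dft_mat_idft_mat:
  assumes n: "n > 0"
  shows "dft_mat n * idft_mat n = 1\<^sub>m n"
proof (rule eq_matI)
  fix i j assume "i < dim_row (1\<^sub>m n)" "j < dim_col (1\<^sub>m n)"
  then have i: "i < n" and j: "j < n" by auto
  have "(dft_mat n * idft_mat n) $$ (i, j) = (\<Sum>k<n. root_unity n ((int i - int j) * int k)) / of_nat n"
    using i j
    by (simp add: dft_mat_def idft_mat_def scalar_prod_def sum_divide_distrib lessThan_atLeast0
        root_unity_add[symmetric] algebra_simps)
  also have "\<dots> = (if i = j then 1 else 0)"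
  proof -
    have "int n dvd int i - int j \<longleftrightarrow> i = j"
      using i j by (simp flip: mod_eq_dvd_iff of_nat_mod)
    then show ?thesis
      using n by (simp add: sum_root_unity)
  qed
  finally show "(dft_mat n * idft_mat n) $$ (i, j) = 1\<^sub>m n $$ (i, j)"
    using i j by simp
qed (simp_all add: dft_mat_def idft_mat_def)

lemma sum_circulant_row:
  fixes i n :: nat
  assumes "i < n"
  shows "(\<Sum>k<n. f ((k + n - i) mod n) k) = (\<Sum>m<n. f m ((m + i) mod n))"
proof (rule sum.reindex_bij_witness[of _ "\<lambda>m. (m + i) mod n" "\<lambda>k. (k + n - i) mod n"])
  fix k assume "k \<in> {..<n}"
  have "((k + n - i) mod n + i) mod n = (k + n - i + i) mod n"
    by (rule mod_add_left_eq)
  also have "\<dots> = k"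
    using assms \<open>k \<in> {..<n}\<close> by simp
  finally show "((k + n - i) mod n + i) mod n = k" .
  then show "f ((k + n - i) mod n) (((k + n - i) mod n + i) mod n) = f ((k + n - i) mod n) k"
    by simp
next
  fix m assume "m \<in> {..<n}"
  have "((m + i) mod n + n - i) mod n = ((m + i) mod n + (n - i)) mod n"
    using assms by simp
  also have "\<dots> = (m + i + (n - i)) mod n"
    by (rule mod_add_left_eq)
  also have "\<dots> = m"
    using assms \<open>m \<in> {..<n}\<close> by simp
  finally show "((m + i) mod n + n - i) mod n = m" .
qed (use assms in auto)

lemma Spec_circulant:
  fixes c :: "nat \<Rightarrow> complex"
  assumes n: "n > 0"
  shows "Spec (mat n n (\<lambda>(i, j). c ((j + n - i) mod n)))
       = mset (map (\<lambda>j. \<Sum>m<n. c m * root_unity n (int j * int m)) [0..<n])"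
proof -
  define A where "A = mat n n (\<lambda>(i, j). c ((j + n - i) mod n))"
  define ev where "ev j = (\<Sum>m<n. c m * root_unity n (int j * int m))" for j
  define Dg where "Dg = mat n n (\<lambda>(i, j). if i = j then ev i else 0)"
  let ?F = "dft_mat n" and ?G = "idft_mat n"
  have carrier: "A \<in> carrier_mat n n" "?F \<in> carrier_mat n n" "?G \<in> carrier_mat n n"
    "Dg \<in> carrier_mat n n"
    by (auto simp: A_def dft_mat_def idft_mat_def Dg_def)
  have FG: "?F * ?G = 1\<^sub>m n"
    using dft_mat_idft_mat[OF n] .
  have AF: "A * ?F = ?F * Dg"
  proof (rule eq_matI)
    fix i j assume "i < dim_row (?F * Dg)" "j < dim_col (?F * Dg)"
    then have i: "i < n" and j: "j < n"
      by (auto simp: dft_mat_def Dg_def)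
    have "(A * ?F) $$ (i, j) = (\<Sum>k<n. c ((k + n - i) mod n) * root_unity n (int k * int j))"
      using i j by (simp add: A_def dft_mat_def scalar_prod_def lessThan_atLeast0)
    also have "\<dots> = (\<Sum>m<n. c m * root_unity n (int ((m + i) mod n) * int j))"
      by (rule sum_circulant_row[OF i])
    also have "\<dots> = (\<Sum>m<n. c m * (root_unity n (int i * int j) * root_unity n (int j * int m)))"
    proof (rule sum.cong[OF refl])
      fix m
      have "root_unity n (int ((m + i) mod n) * int j) = root_unity n (int (m + i) * int j)"
        by (rule root_unity_cong[OF n]) simp
      then show "c m * root_unity n (int ((m + i) mod n) * int j)
          = c m * (root_unity n (int i * int j) * root_unity n (int j * int m))"
        by (simp add: root_unity_add[symmetric] algebra_simps)
    qed
    also have "\<dots> = (?F * Dg) $$ (i, j)"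
      using i j
      by (simp add: ev_def dft_mat_def Dg_def scalar_prod_def sum_distrib_left lessThan_atLeast0
          if_distrib sum.delta' algebra_simps cong: if_cong)
    finally show "(A * ?F) $$ (i, j) = (?F * Dg) $$ (i, j)" .
  qed (auto simp: A_def dft_mat_def Dg_def)
  have "similar_mat A Dg"
  proof -
    have "A = ?F * Dg * ?G"
      using carrier by (metis AF FG assoc_mult_mat right_mult_one_mat)
    then show ?thesis
      unfolding similar_mat_def
      using FG mat_mult_left_right_inverse[OF carrier(2,3) FG] carrier
      by (blast intro: similar_mat_witI)
  qed
  then have "char_poly A = char_poly Dg"
    by (rule char_poly_similar)
  also have "\<dots> = (\<Prod>a\<leftarrow>map ev [0..<n]. [:- a, 1:])"
  proof -
    have "diag_mat Dg = map ev [0..<n]"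
      by (rule nth_equalityI) (auto simp: diag_mat_def Dg_def)
    then show ?thesis
      using char_poly_upper_triangular[OF carrier(4)] by (simp add: upper_triangular_def Dg_def)
  qed
  finally have "Spec A = Abs_multiset (count (mset (map ev [0..<n])))"
    unfolding Spec_def by (simp only: order_prod_list_linear)
  then show ?thesis
    unfolding A_def ev_def count_inverse .
qed

section \<open>Divisors of p^2 q^2\<close>

(* min 2 (multiplicity p m) for m \<noteq> 0, and 2 at m = 0 *)
definition capped_mult :: "nat \<Rightarrow> nat \<Rightarrow> nat" where
  "capped_mult p m = (if p^2 dvd m then 2 else if p dvd m then 1 else 0)"

lemma capped_mult_le_2: "capped_mult p m \<le> 2"
  by (simp add: capped_mult_def)

lemma capped_mult_0 [simp]: "capped_mult p 0 = 2"
  by (simp add: capped_mult_def)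

lemma power_dvd_iff_le_capped_mult:
  assumes "i \<le> 2"
  shows "p^i dvd m \<longleftrightarrow> i \<le> capped_mult p m"
proof -
  have "p^2 dvd m \<Longrightarrow> p dvd m"
    by (metis dvd_mult_left power2_eq_square)
  then show ?thesis
    using assms by (cases i; cases "i - 1") (auto simp: capped_mult_def power2_eq_square)
qed

lemma prime_powers_dvd_iff:
  fixes p q :: nat
  assumes "prime p" "prime q" "p \<noteq> q"
  shows "p^i * q^k dvd m \<longleftrightarrow> p^i dvd m \<and> q^k dvd m"
proof -
  have "coprime p q"
    using assms primes_coprime by blast
  then have "coprime (p^i) (q^k)"
    by simp
  then show ?thesis
    by (meson divides_mult dvd_mult_left dvd_mult_right)
qed

lemma dvd_prime_squares:
  fixes p q d :: nat
  assumes "prime p" "prime q" "d dvd p^2 * q^2"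
  obtains i k where "i \<le> 2" "k \<le> 2" "d = p^i * q^k"
proof -
  obtain a b where "d = a * b" "a dvd p^2" "b dvd q^2"
    using division_decomp[OF assms(3)] by blast
  then show ?thesis
    using that divides_primepow_nat[OF assms(1)] divides_primepow_nat[OF assms(2)] by metis
qed

lemma gcd_prime_squares:
  fixes p q m :: nat
  assumes p: "prime p" and q: "prime q" and pq: "p \<noteq> q"
  shows "gcd m (p^2 * q^2) = p ^ capped_mult p m * q ^ capped_mult q m"
proof (rule dvd_antisym)
  have "p ^ capped_mult p m * q ^ capped_mult q m dvd m"
    using prime_powers_dvd_iff[OF p q pq] power_dvd_iff_le_capped_mult capped_mult_le_2 by blast
  moreover have "p ^ capped_mult p m * q ^ capped_mult q m dvd p^2 * q^2"
    by (intro mult_dvd_mono le_imp_power_dvd capped_mult_le_2)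
  ultimately show "p ^ capped_mult p m * q ^ capped_mult q m dvd gcd m (p^2 * q^2)"
    by simp
next
  obtain i k where ik: "i \<le> 2" "k \<le> 2" and g: "gcd m (p^2 * q^2) = p^i * q^k"
    using dvd_prime_squares[OF p q, of "gcd m (p^2 * q^2)"] by auto
  then have "p^i dvd m" "q^k dvd m"
    using prime_powers_dvd_iff[OF p q pq] by (metis gcd_dvd1)+
  then have "i \<le> capped_mult p m" "k \<le> capped_mult q m"
    using ik power_dvd_iff_le_capped_mult by auto
  then show "gcd m (p^2 * q^2) dvd p ^ capped_mult p m * q ^ capped_mult q m"
    unfolding g by (intro mult_dvd_mono le_imp_power_dvd)
qed

lemma multiples_below:
  fixes d n N :: nat
  assumes "0 < d" "n = d * N"
  shows "{j. j < n \<and> d dvd j} = (\<lambda>t. d * t) ` {..<N}"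
proof -
  have "j \<in> (\<lambda>t. d * t) ` {..<N}" if "j < n" "d dvd j" for j
    using that assms by (auto elim!: dvdE)
  then show ?thesis
    using assms by auto
qed

lemma card_multiples_below:
  fixes d n :: nat
  assumes "0 < d" "d dvd n"
  shows "card {j. j < n \<and> d dvd j} = n div d"
proof -
  obtain N where N: "n = d * N"
    using assms(2) by blast
  have "card ((\<lambda>t. d * t) ` {..<N}) = N"
    using assms(1) by (subst card_image) (auto simp: inj_on_def)
  then show ?thesis
    using multiples_below[OF assms(1) N] N assms(1) by simp
qed

lemma sum_multiples_root_unity:
  assumes "e * N = n" "n > 0"
  shows "(\<Sum>m<n. if e dvd m then root_unity n (int j * int m) else 0)
       = (if N dvd j then of_nat N else 0)"
proof -
  have e: "e > 0" and N: "N > 0"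
    using assms by auto
  have "(\<Sum>m<n. if e dvd m then root_unity n (int j * int m) else 0)
      = (\<Sum>m\<in>{m. m < n \<and> e dvd m}. root_unity n (int j * int m))"
    by (simp add: sum.inter_filter[symmetric] lessThan_def)
  also have "\<dots> = (\<Sum>t<N. root_unity n (int j * int (e * t)))"
    using multiples_below[OF e assms(1)[symmetric]] e by (simp add: sum.reindex inj_on_def)
  also have "\<dots> = (\<Sum>t<N. root_unity N (int j * int t))"
  proof (rule sum.cong[OF refl])
    fix t
    show "root_unity n (int j * int (e * t)) = root_unity N (int j * int t)"
      using root_unity_scale[OF e, of N "int j * int t"] assms(1) by (simp add: algebra_simps)
  qed
  also have "\<dots> = (if N dvd j then of_nat N else 0)"
    using sum_root_unity[OF N] by simp
  finally show ?thesis .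
qed

lemma sum_multiples_prime_squares_root_unity:
  fixes p q n :: nat
  assumes p: "prime p" and q: "prime q" and pq: "p \<noteq> q" and n: "n = p^2 * q^2"
    and "i \<le> 2" "k \<le> 2"
  shows "(\<Sum>m<n. if p^(2-i) * q^(2-k) dvd m then root_unity n (int j * int m) else 0)
       = (if i \<le> capped_mult p j \<and> k \<le> capped_mult q j then of_nat (p^i * q^k) else 0)"
proof -
  have "n > 0"
    using n p q prime_gt_0_nat by simp
  have "p^(2-i) * p^i = p^2" "q^(2-k) * q^k = q^2"
    using assms(5,6) by (simp_all flip: power_add)
  then have "p^(2-i) * q^(2-k) * (p^i * q^k) = n"
    using n by (metis mult.assoc mult.left_commute)
  moreover have "p^i * q^k dvd j \<longleftrightarrow> i \<le> capped_mult p j \<and> k \<le> capped_mult q j"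
    using prime_powers_dvd_iff[OF p q pq] power_dvd_iff_le_capped_mult assms(5,6) by simp
  ultimately show ?thesis
    using sum_multiples_root_unity[OF _ \<open>n > 0\<close>, of "p^(2-i) * q^(2-k)" "p^i * q^k" j] by simp
qed

lemma card_capped_mult_classes:
  fixes p n :: nat
  assumes p: "3 \<le> p" and dvd: "p^2 dvd n" and n: "n > 0"
  defines "c \<equiv> \<lambda>A. card {j. j < n \<and> capped_mult p j = A}"
  shows "c 1 + c 2 < c 0" "c 2 < c 1" "0 < c 2"
proof -
  obtain N where N: "n = p^2 * N"
    using dvd by blast
  have "N > 0" "p > 0"
    using N n p by auto
  have mult_p: "card {j. j < n \<and> p dvd j} = p * N"
    using card_multiples_below[of p n] \<open>p > 0\<close> N by (simp add: power2_eq_square)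
  have mult_p2: "card {j. j < n \<and> p^2 dvd j} = N"
    using card_multiples_below[of "p^2" n] \<open>p > 0\<close> N dvd by simp
  have sub: "{j. j < n \<and> p^2 dvd j} \<subseteq> {j. j < n \<and> p dvd j}"
    by (auto simp: power2_eq_square)
  have "{j. j < n \<and> capped_mult p j = 2} = {j. j < n \<and> p^2 dvd j}"
    by (auto simp: capped_mult_def)
  then have "c 2 = N"
    using mult_p2 unfolding c_def by simp
  moreover have "c 1 = p * N - N"
  proof -
    have "{j. j < n \<and> capped_mult p j = 1} = {j. j < n \<and> p dvd j} - {j. j < n \<and> p^2 dvd j}"
      by (auto simp: capped_mult_def)
    then show ?thesis
      unfolding c_def using sub mult_p mult_p2 by (simp add: card_Diff_subset)
  qed
  moreover have "c 0 = n - p * N"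
  proof -
    have "{j. j < n \<and> capped_mult p j = 0} = {..<n} - {j. j < n \<and> p dvd j}"
      by (auto simp: capped_mult_def power2_eq_square)
    then show ?thesis
      unfolding c_def using mult_p by (simp add: card_Diff_subset subset_eq)
  qed
  moreover have "n = p * (p * N)" "3 * (p * N) \<le> p * (p * N)" "3 * N \<le> p * N"
    using N p by (simp_all add: power2_eq_square)
  ultimately show "c 1 + c 2 < c 0" "c 2 < c 1" "0 < c 2"
    using \<open>N > 0\<close> by linarith+
qed

section \<open>Eigenvalues of ICG(p^2 q^2, D)\<close>

definition mixed_diff :: "(nat \<Rightarrow> nat \<Rightarrow> int) \<Rightarrow> nat \<Rightarrow> nat \<Rightarrow> int" where
  "mixed_diff x i k = x i k - x (Suc i) k - x i (Suc k) + x (Suc i) (Suc k)"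

lemma mixed_diff_telescope:
  assumes vanish: "\<And>i k. N < i \<or> N < k \<Longrightarrow> x i k = 0" and "A \<le> N" "B \<le> N"
  shows "x A B = (\<Sum>i=A..N. \<Sum>k=B..N. mixed_diff x i k)"
proof -
  define g where "g i k = x i k - x (Suc i) k" for i k
  have "(\<Sum>k=B..N. mixed_diff x i k) = g i B" for i
  proof -
    have "(\<Sum>k=B..N. mixed_diff x i k) = - (\<Sum>k=B..N. g i (Suc k) - g i k)"
      by (simp add: mixed_diff_def g_def sum_negf[symmetric] algebra_simps)
    also have "\<dots> = g i B"
      using sum_Suc_diff[of B N "g i"] \<open>B \<le> N\<close> vanish by (simp add: g_def)
    finally show ?thesis .
  qed
  then have "(\<Sum>i=A..N. \<Sum>k=B..N. mixed_diff x i k) = - (\<Sum>i=A..N. x (Suc i) B - x i B)"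
    by (simp add: g_def sum_negf[symmetric])
  also have "\<dots> = x A B"
    using sum_Suc_diff[of A N "\<lambda>i. x i B"] \<open>A \<le> N\<close> vanish by simp
  finally show ?thesis ..
qed

lemma sum_atMost_if_le:
  fixes A N :: nat
  assumes "A \<le> N"
  shows "(\<Sum>i\<le>N. if i \<le> A then f i else 0) = (\<Sum>i\<le>A. f i)"
proof -
  have "{i \<in> {..N}. i \<le> A} = {..A}"
    using assms by auto
  then show ?thesis
    by (simp flip: sum.inter_filter)
qed

lemma sum_atMost_if_ge:
  fixes A N :: nat
  shows "(\<Sum>i\<le>N. if A \<le> i then f i else 0) = (\<Sum>i=A..N. f i)"
proof -
  have "{i \<in> {..N}. A \<le> i} = {A..N}"
    by auto
  then show ?thesis
    by (simp flip: sum.inter_filter)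
qed

lemma sum_atLeastAtMost_square:
  fixes A B N :: nat
  shows "(\<Sum>i=A..N. \<Sum>k=B..N. f i k)
       = (\<Sum>i\<le>N. \<Sum>k\<le>N. if A \<le> i \<and> B \<le> k then f i k else 0)"
proof -
  have "(\<Sum>i\<le>N. \<Sum>k\<le>N. if A \<le> i \<and> B \<le> k then f i k else 0)
      = (\<Sum>i\<le>N. if A \<le> i then \<Sum>k\<le>N. if B \<le> k then f i k else 0 else 0)"
    by (intro sum.cong) auto
  then show ?thesis
    by (simp only: sum_atMost_if_ge)
qed

lemma sum_atMost_square:
  fixes A B N :: nat
  assumes "A \<le> N" "B \<le> N"
  shows "(\<Sum>i\<le>N. \<Sum>k\<le>N. if i \<le> A \<and> k \<le> B then f i k else 0)
       = (\<Sum>i\<le>A. \<Sum>k\<le>B. f i k)"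
proof -
  have "(\<Sum>i\<le>N. \<Sum>k\<le>N. if i \<le> A \<and> k \<le> B then f i k else 0)
      = (\<Sum>i\<le>N. if i \<le> A then \<Sum>k\<le>N. if k \<le> B then f i k else 0 else 0)"
    by (intro sum.cong) auto
  then show ?thesis
    using assms by (simp only: sum_atMost_if_le)
qed

(* indexed by the exponents of the cofactor n / d, where n = p^2 q^2 *)
definition divisor_indicator :: "nat \<Rightarrow> nat \<Rightarrow> nat set \<Rightarrow> nat \<Rightarrow> nat \<Rightarrow> int" where
  "divisor_indicator p q D i k = (if i \<le> 2 \<and> k \<le> 2 \<and> p^(2-i) * q^(2-k) \<in> D then 1 else 0)"

(* For x = divisor_indicator p q D this is the eigenvalue at every j with
   capped_mult p j = A and capped_mult q j = B, see ICG_eigenvalue. *)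
definition eigenvalue_form :: "nat \<Rightarrow> nat \<Rightarrow> (nat \<Rightarrow> nat \<Rightarrow> int) \<Rightarrow> nat \<Rightarrow> nat \<Rightarrow> int" where
  "eigenvalue_form p q x A B = (\<Sum>i\<le>A. \<Sum>k\<le>B. mixed_diff x i k * int p ^ i * int q ^ k)"

lemma ICG_conn_mod_iff:
  assumes "D \<subseteq> divisors_of n - {n}" "m < n"
  shows "(\<exists>s\<in>ICG_conn n D. s mod n = m) \<longleftrightarrow> gcd m n \<in> D"
proof
  assume "\<exists>s\<in>ICG_conn n D. s mod n = m"
  then obtain s where "s \<in> ICG_conn n D" "s mod n = m"
    by blast
  then show "gcd m n \<in> D"
    by (auto simp: ICG_conn_def Gn_def gcd.commute[of _ n] gcd_mod_right)
next
  assume "gcd m n \<in> D"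
  then have "m \<noteq> 0"
    using assms(1) by auto
  then have "m \<in> ICG_conn n D"
    using \<open>gcd m n \<in> D\<close> assms(2) by (auto simp: ICG_conn_def Gn_def)
  then show "\<exists>s\<in>ICG_conn n D. s mod n = m"
    using assms(2) by force
qed

lemma gcd_in_divisors_expand:
  fixes p q :: nat
  assumes p: "prime p" and q: "prime q" and pq: "p \<noteq> q"
  shows "(if gcd m (p^2 * q^2) \<in> D then 1 else 0)
       = (\<Sum>i\<le>2. \<Sum>k\<le>2. if p^(2-i) * q^(2-k) dvd m
            then mixed_diff (divisor_indicator p q D) i k else 0)"
proof -
  let ?x = "divisor_indicator p q D" and ?a = "capped_mult p m" and ?b = "capped_mult q m"
  have "(if gcd m (p^2 * q^2) \<in> D then 1 else 0) = ?x (2 - ?a) (2 - ?b)"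
    using capped_mult_le_2[of p m] capped_mult_le_2[of q m]
    by (simp add: gcd_prime_squares[OF p q pq] divisor_indicator_def)
  also have "\<dots> = (\<Sum>i=2-?a..2. \<Sum>k=2-?b..2. mixed_diff ?x i k)"
    by (rule mixed_diff_telescope) (auto simp: divisor_indicator_def)
  also have "\<dots> = (\<Sum>i\<le>2. \<Sum>k\<le>2.
      if 2 - ?a \<le> i \<and> 2 - ?b \<le> k then mixed_diff ?x i k else 0)"
    by (rule sum_atLeastAtMost_square)
  also have "\<dots> = (\<Sum>i\<le>2. \<Sum>k\<le>2. if p^(2-i) * q^(2-k) dvd m then mixed_diff ?x i k else 0)"
  proof (intro sum.cong refl)
    fix i k :: nat assume "i \<in> {..2}" "k \<in> {..2}"
    then show "(if 2 - ?a \<le> i \<and> 2 - ?b \<le> k then mixed_diff ?x i k else 0)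
        = (if p^(2-i) * q^(2-k) dvd m then mixed_diff ?x i k else 0)"
      using prime_powers_dvd_iff[OF p q pq] power_dvd_iff_le_capped_mult
        capped_mult_le_2[of p m] capped_mult_le_2[of q m]
      by auto
  qed
  finally show ?thesis .
qed

lemma ICG_eigenvalue:
  fixes p q n :: nat
  assumes p: "prime p" and q: "prime q" and pq: "p \<noteq> q" and n: "n = p^2 * q^2"
  shows "(\<Sum>m<n. (if gcd m n \<in> D then 1 else 0) * root_unity n (int j * int m))
       = of_int (eigenvalue_form p q (divisor_indicator p q D) (capped_mult p j) (capped_mult q j))"
proof -
  let ?y = "mixed_diff (divisor_indicator p q D)"
  have "n > 0"
    using n p q prime_gt_0_nat by simp
  have "(\<Sum>m<n. (if gcd m n \<in> D then 1 else 0) * root_unity n (int j * int m))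
      = (\<Sum>m<n. \<Sum>i\<le>2. \<Sum>k\<le>2. of_int (?y i k) *
            (if p^(2-i) * q^(2-k) dvd m then root_unity n (int j * int m) else 0))"
  proof (rule sum.cong[OF refl])
    fix m
    have "(if gcd m n \<in> D then 1 else 0 :: complex) = of_int (if gcd m n \<in> D then 1 else 0)"
      by simp
    also have "\<dots> = (\<Sum>i\<le>2. \<Sum>k\<le>2. of_int (if p^(2-i) * q^(2-k) dvd m then ?y i k else 0))"
      unfolding n gcd_in_divisors_expand[OF p q pq] by simp
    finally have indicator: "(if gcd m n \<in> D then 1 else 0 :: complex)
        = (\<Sum>i\<le>2. \<Sum>k\<le>2. of_int (if p^(2-i) * q^(2-k) dvd m then ?y i k else 0))" .
    show "(if gcd m n \<in> D then 1 else 0) * root_unity n (int j * int m)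
        = (\<Sum>i\<le>2. \<Sum>k\<le>2. of_int (?y i k) *
            (if p^(2-i) * q^(2-k) dvd m then root_unity n (int j * int m) else 0))"
      unfolding indicator sum_distrib_right by (intro sum.cong refl) simp
  qed
  also have "\<dots> = (\<Sum>i\<le>2. \<Sum>k\<le>2. of_int (?y i k) *
      (\<Sum>m<n. if p^(2-i) * q^(2-k) dvd m then root_unity n (int j * int m) else 0))"
    by (simp add: sum.swap[of _ "{..<n}"] sum_distrib_left)
  also have "\<dots> = (\<Sum>i\<le>2. \<Sum>k\<le>2. if i \<le> capped_mult p j \<and> k \<le> capped_mult q j
      then of_int (?y i k * int p ^ i * int q ^ k) else 0)"
    by (intro sum.cong refl) (simp add: sum_multiples_prime_squares_root_unity[OF p q pq n] mult.assoc)
  also have "\<dots> = of_int (eigenvalue_form p q (divisor_indicator p q D) (capped_mult p j) (capped_mult q j))"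
    by (simp add: sum_atMost_square capped_mult_le_2 eigenvalue_form_def)
  finally show ?thesis .
qed

lemma Spec_ICG:
  fixes p q n :: nat
  assumes p: "prime p" and q: "prime q" and pq: "p \<noteq> q" and n: "n = p^2 * q^2"
    and D: "D \<subseteq> divisors_of n - {n}"
  shows "Spec (ICG_adj n D)
       = mset (map (\<lambda>j. of_int (eigenvalue_form p q (divisor_indicator p q D)
                                     (capped_mult p j) (capped_mult q j))) [0..<n])"
proof -
  have "n > 0"
    using n p q prime_gt_0_nat by simp
  define c :: "nat \<Rightarrow> complex" where "c m = (if gcd m n \<in> D then 1 else 0)" for m
  have adj: "ICG_adj n D = mat n n (\<lambda>(i, j). c ((j + n - i) mod n))"
    unfolding ICG_adj_def cay_adj_def c_def
    using ICG_conn_mod_iff[OF D] \<open>n > 0\<close> by (intro cong_mat) auto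
  show ?thesis
    unfolding adj Spec_circulant[OF \<open>n > 0\<close>] unfolding c_def ICG_eigenvalue[OF p q pq n] ..
qed

lemma ICG_eigenvalue_le_degree:
  fixes p q :: nat
  assumes p: "prime p" and q: "prime q" and pq: "p \<noteq> q"
  shows "eigenvalue_form p q (divisor_indicator p q D) (capped_mult p j) (capped_mult q j)
       \<le> eigenvalue_form p q (divisor_indicator p q D) 2 2"
proof -
  let ?n = "p^2 * q^2" and ?c = "\<lambda>m. if gcd m (p^2 * q^2) \<in> D then 1 else 0 :: complex"
  have "of_int (eigenvalue_form p q (divisor_indicator p q D) (capped_mult p j) (capped_mult q j))
      = Re (\<Sum>m<?n. ?c m * root_unity ?n (int j * int m))"
    using ICG_eigenvalue[OF p q pq refl, of D j] by simp
  also have "\<dots> \<le> Re (\<Sum>m<?n. ?c m)"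
    unfolding Re_sum by (intro sum_mono) (simp add: root_unity_def)
  also have "\<dots> = of_int (eigenvalue_form p q (divisor_indicator p q D) 2 2)"
    using ICG_eigenvalue[OF p q pq refl, of D 0] by simp
  finally show ?thesis
    by linarith
qed

section \<open>Recovering the divisor set from the spectrum\<close>

lemma eigenvalue_form_0_0: "eigenvalue_form p q x 0 0 = mixed_diff x 0 0"
  by (simp add: eigenvalue_form_def)

lemma eigenvalue_form_Suc_left:
  "eigenvalue_form p q x (Suc A) B
     = eigenvalue_form p q x A B + (\<Sum>k\<le>B. mixed_diff x (Suc A) k * int q ^ k) * int p ^ Suc A"
  by (simp add: eigenvalue_form_def sum_distrib_left sum_distrib_right algebra_simps)

lemma eigenvalue_form_Suc_right:
  "eigenvalue_form p q x A (Suc B)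
     = eigenvalue_form p q x A B + (\<Sum>i\<le>A. mixed_diff x i (Suc B) * int p ^ i) * int q ^ Suc B"
  by (simp add: eigenvalue_form_def sum.distrib sum_distrib_left sum_distrib_right algebra_simps)

lemma eigenvalue_form_diff:
  "eigenvalue_form p q (\<lambda>i k. x i k - x' i k) A B = eigenvalue_form p q x A B - eigenvalue_form p q x' A B"
  by (simp add: eigenvalue_form_def mixed_diff_def sum_subtractf[symmetric] algebra_simps)

lemma eigenvalue_form_mod_right: "int q dvd eigenvalue_form p q x A B - eigenvalue_form p q x A 0"
proof -
  have "eigenvalue_form p q x A B - eigenvalue_form p q x A 0
      = (\<Sum>i\<le>A. (\<Sum>k\<le>B. mixed_diff x i k * int p ^ i * int q ^ k) - mixed_diff x i 0 * int p ^ i)"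
    by (simp add: eigenvalue_form_def sum_subtractf)
  also have "\<dots> = (\<Sum>i\<le>A. \<Sum>k\<in>{..B} - {0}. mixed_diff x i k * int p ^ i * int q ^ k)"
    by (intro sum.cong refl) (simp add: sum.remove[of "{..B}" 0])
  also have "int q dvd \<dots>"
    by (intro dvd_sum) (simp add: dvd_mult)
  finally show ?thesis .
qed

lemma eigenvalue_form_mod_left: "int p dvd eigenvalue_form p q x A B - eigenvalue_form p q x 0 B"
proof -
  have "eigenvalue_form p q x A B - eigenvalue_form p q x 0 B
      = (\<Sum>i\<in>{..A} - {0}. \<Sum>k\<le>B. mixed_diff x i k * int p ^ i * int q ^ k)"
    by (simp add: eigenvalue_form_def sum.remove[of "{..A}" 0])
  also have "int p dvd \<dots>"
    by (intro dvd_sum) (simp add: dvd_mult)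
  finally show ?thesis .
qed

lemma dvd_abs_less_eq_0:
  fixes m t :: int
  assumes "m dvd t" "\<bar>t\<bar> < m"
  shows "t = 0"
proof (rule ccontr)
  assume "t \<noteq> 0"
  then have "\<bar>m\<bar> \<le> \<bar>t\<bar>"
    using assms(1) by (rule dvd_imp_le_int)
  then show False
    using assms(2) by linarith
qed

lemma coprime_dvd_digit_eq_0:
  fixes m u t b :: int
  assumes "m dvd u" "m dvd u + t * b ^ k" "coprime m b" "\<bar>t\<bar> < m"
  shows "t = 0"
proof (rule dvd_abs_less_eq_0)
  have "m dvd t * b ^ k"
    using assms(1,2) by (simp add: dvd_add_right_iff)
  then show "m dvd t"
    using assms(3) by (simp add: coprime_dvd_mult_left_iff)
qed (fact assms(4))

lemma sum_atMost_two: "(\<Sum>i\<le>2. f i) = f 0 + f 1 + f (2::nat)"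
  by (simp add: eval_nat_numeral add.assoc)

lemma int_unit_range: "\<bar>a :: int\<bar> \<le> 1 \<Longrightarrow> a \<in> {-1, 0, 1}"
  by auto

lemma eigenvalue_form_first_column:
  fixes p q :: nat and d :: "nat \<Rightarrow> nat \<Rightarrow> int"
  assumes coprime: "coprime (int q) (int p)" and "5 \<le> q"
    and bounded: "\<And>i k. \<bar>d i k\<bar> \<le> 1"
    and vanish: "\<And>i k. 2 < i \<or> 2 < k \<Longrightarrow> d i k = 0"
    and "d 0 0 = 0"
    and mod_q: "\<And>A. A \<le> 2 \<Longrightarrow> int q dvd eigenvalue_form p q d A 0"
  shows "mixed_diff d 0 0 = 0" "mixed_diff d 1 0 = 0" "mixed_diff d 2 0 = 0"
proof -
  \<comment> \<open>simp rewrites Suc 1 to Suc (Suc 0); keep the index 2 a numeral\<close>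
  note numeral_2_eq_2[symmetric, simp]
  have range: "-1 \<le> d i k" "d i k \<le> 1" for i k
    using bounded[of i k] by auto
  note entry_bounds = range[of 0 1] range[of 1 0] range[of 1 1] range[of 2 0] range[of 2 1]
  show "mixed_diff d 0 0 = 0"
  proof (rule dvd_abs_less_eq_0)
    show "int q dvd mixed_diff d 0 0"
      using mod_q[of 0] by (simp add: eigenvalue_form_0_0)
    show "\<bar>mixed_diff d 0 0\<bar> < int q"
      using entry_bounds \<open>5 \<le> q\<close> \<open>d 0 0 = 0\<close> by (simp add: mixed_diff_def)
  qed
  show "mixed_diff d 1 0 = 0"
  proof (rule coprime_dvd_digit_eq_0[OF mod_q[of 0] _ coprime, of _ 1])
    show "int q dvd eigenvalue_form p q d 0 0 + mixed_diff d 1 0 * int p ^ 1"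
      using mod_q[of 1] eigenvalue_form_Suc_left[of p q d 0 0] by simp
    show "\<bar>mixed_diff d 1 0\<bar> < int q"
      using entry_bounds \<open>5 \<le> q\<close> by (simp add: mixed_diff_def)
  qed simp
  show "mixed_diff d 2 0 = 0"
  proof (rule coprime_dvd_digit_eq_0[OF mod_q[of 1] _ coprime, of _ 2])
    show "int q dvd eigenvalue_form p q d 1 0 + mixed_diff d 2 0 * int p ^ 2"
      using mod_q[of 2] eigenvalue_form_Suc_left[of p q d 1 0] by simp
    show "\<bar>mixed_diff d 2 0\<bar> < int q"
      using entry_bounds \<open>5 \<le> q\<close> by (simp add: mixed_diff_def vanish)
  qed simp
qed

lemma eigenvalue_form_first_row:
  fixes p q :: nat and d :: "nat \<Rightarrow> nat \<Rightarrow> int"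
  assumes coprime: "coprime (int p) (int q)" and "3 \<le> p"
    and bounded: "\<And>i k. \<bar>d i k\<bar> \<le> 1"
    and vanish: "\<And>i k. 2 < i \<or> 2 < k \<Longrightarrow> d i k = 0"
    and "d 0 0 = 0"
    and mod_p: "\<And>B. B \<le> 2 \<Longrightarrow> int p dvd eigenvalue_form p q d 0 B"
    and column: "mixed_diff d 0 0 = 0" "mixed_diff d 1 0 = 0" "mixed_diff d 2 0 = 0"
  shows "mixed_diff d 0 2 = 0" "mixed_diff d 0 1 = 0"
proof -
  note numeral_2_eq_2[symmetric, simp]
  have range: "-1 \<le> d i k" "d i k \<le> 1" for i k
    using bounded[of i k] by auto
  show "mixed_diff d 0 2 = 0"
  proof (rule coprime_dvd_digit_eq_0[OF mod_p[of 1] _ coprime, of _ 2])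
    show "int p dvd eigenvalue_form p q d 0 1 + mixed_diff d 0 2 * int q ^ 2"
      using mod_p[of 2] eigenvalue_form_Suc_right[of p q d 0 1] by simp
    show "\<bar>mixed_diff d 0 2\<bar> < int p"
      using range[of 0 2] range[of 1 2] \<open>3 \<le> p\<close> by (simp add: mixed_diff_def vanish)
  qed simp
  then have "mixed_diff d 0 1 = - d 1 0"
    using column \<open>d 0 0 = 0\<close> by (simp add: mixed_diff_def vanish)
  show "mixed_diff d 0 1 = 0"
  proof (rule coprime_dvd_digit_eq_0[OF mod_p[of 0] _ coprime, of _ 1])
    show "int p dvd eigenvalue_form p q d 0 0 + mixed_diff d 0 1 * int q ^ 1"
      using mod_p[of 1] eigenvalue_form_Suc_right[of p q d 0 0] by simp
    show "\<bar>mixed_diff d 0 1\<bar> < int p"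
      using \<open>mixed_diff d 0 1 = - d 1 0\<close> range[of 1 0] \<open>3 \<le> p\<close> by simp
  qed simp
qed

lemma eigenvalue_form_kernel:
  fixes p q :: nat and d :: "nat \<Rightarrow> nat \<Rightarrow> int"
  assumes p: "prime p" and q: "prime q" and "3 \<le> p" "p < q"
    and bounded: "\<And>i k. \<bar>d i k\<bar> \<le> 1"
    and vanish: "\<And>i k. 2 < i \<or> 2 < k \<Longrightarrow> d i k = 0"
    and corners: "d 0 0 = 0" "d 2 2 = 0"
    and mod_q: "\<And>A. A \<le> 2 \<Longrightarrow> int q dvd eigenvalue_form p q d A 0"
    and mod_p: "\<And>B. B \<le> 2 \<Longrightarrow> int p dvd eigenvalue_form p q d 0 B"
    and top: "eigenvalue_form p q d 2 2 = 0"
  shows "d i k = 0"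
proof -
  have "odd q"
    using q \<open>3 \<le> p\<close> \<open>p < q\<close> by (intro prime_odd_nat) auto
  then have "5 \<le> q"
    using \<open>3 \<le> p\<close> \<open>p < q\<close> by presburger
  have coprime: "coprime (int q) (int p)" "coprime (int p) (int q)"
    using p q \<open>p < q\<close> primes_coprime by auto
  note column = eigenvalue_form_first_column[OF coprime(1) \<open>5 \<le> q\<close> bounded vanish corners(1) mod_q]
  note row = eigenvalue_form_first_row[OF coprime(2) \<open>3 \<le> p\<close> bounded vanish corners(1) mod_p column]
  note numeral_2_eq_2[symmetric, simp]
  have inner: "d 0 1 = 0" "d 1 0 = 0" "d 1 1 = 0" "d 2 0 = d 2 1" "d 0 2 = d 1 2"
    using column row by (simp_all add: mixed_diff_def corners vanish)
  have "eigenvalue_form p q d 2 2 = int p * int q * (d 2 1 * (int p - 1) + d 1 2 * (int q - 1))"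
    using inner by (simp add: eigenvalue_form_def sum_atMost_two mixed_diff_def corners vanish
        algebra_simps power2_eq_square)
  then have "d 2 1 * (int p - 1) + d 1 2 * (int q - 1) = 0"
    using top \<open>3 \<le> p\<close> \<open>5 \<le> q\<close> by simp
  then have "d 2 1 = 0" "d 1 2 = 0"
    using int_unit_range[OF bounded[of 2 1]] int_unit_range[OF bounded[of 1 2]]
      \<open>3 \<le> p\<close> \<open>p < q\<close> by auto
  show ?thesis
  proof (cases "i \<le> 2 \<and> k \<le> 2")
    case True
    then have "i \<in> {0, 1, 2}" "k \<in> {0, 1, 2}"
      by auto
    then show ?thesis
      using inner corners \<open>d 2 1 = 0\<close> \<open>d 1 2 = 0\<close> by auto
  qed (use vanish in force)
qed

lemma count_mset_map_upt: "count (mset (map f [0..<n])) v = card {j. j < n \<and> f j = v}"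
  by (simp add: count_image_mset vimage_def Int_def conj_commute)

lemma card_level_set_split:
  fixes a :: "nat \<Rightarrow> nat"
  assumes "\<And>j. a j \<le> 2"
  shows "card {j. j < n \<and> f (a j) = r} = (\<Sum>A\<le>2. if f A = r then card {j. j < n \<and> a j = A} else 0)"
proof -
  have "{j. j < n \<and> f (a j) = r} = (\<Union>A\<in>{..2}. {j. j < n \<and> a j = A \<and> f A = r})"
    using assms by auto
  then have "card {j. j < n \<and> f (a j) = r} = (\<Sum>A\<le>2. card {j. j < n \<and> a j = A \<and> f A = r})"
    by (simp only:) (subst card_UN_disjoint, auto)
  then show ?thesis
    by (simp add: if_distrib cong: if_cong) (intro sum.cong refl, auto)
qed

lemma superincreasing_subset_sums_eq:
  fixes c :: "nat \<Rightarrow> nat"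
  assumes "c 1 + c 2 < c 0" "c 2 < c 1" "0 < c 2"
    and "(\<Sum>A\<le>2. if P A then c A else 0) = (\<Sum>A\<le>2. if Q A then c A else 0)"
    and "A \<le> 2"
  shows "P A \<longleftrightarrow> Q A"
proof -
  have sums: "(if P 0 then c 0 else 0) + (if P 1 then c 1 else 0) + (if P 2 then c 2 else 0)
      = (if Q 0 then c 0 else 0) + (if Q 1 then c 1 else 0) + (if Q 2 then c 2 else 0)"
    using assms(4) unfolding sum_atMost_two .
  have tail_0: "(if R 1 then c 1 else 0) + (if R 2 then c 2 else 0) < c 0" for R
    using assms(1) by auto
  have tail_1: "(if R 2 then c 2 else 0) < c 1" for R
    using assms(2) by auto
  have "P 0 \<longleftrightarrow> Q 0"
    using sums tail_0[of P] tail_0[of Q] by (cases "P 0"; cases "Q 0") auto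
  moreover have "P 1 \<longleftrightarrow> Q 1"
    using sums \<open>P 0 \<longleftrightarrow> Q 0\<close> tail_1[of P] tail_1[of Q] by (cases "P 1"; cases "Q 1") auto
  moreover have "P 2 \<longleftrightarrow> Q 2"
    using sums \<open>P 0 \<longleftrightarrow> Q 0\<close> \<open>P 1 \<longleftrightarrow> Q 1\<close> assms(3)
    by (cases "P 2"; cases "Q 2") auto
  moreover have "A = 0 \<or> A = 1 \<or> A = 2"
    using assms(5) by auto
  ultimately show ?thesis
    by auto
qed

lemma values_determined_by_class_sizes:
  fixes a :: "nat \<Rightarrow> nat" and n :: nat
  defines "c \<equiv> \<lambda>A. card {j. j < n \<and> a j = A}"
  assumes M: "mset (map (\<lambda>j. f (a j)) [0..<n]) = mset (map (\<lambda>j. g (a j)) [0..<n])"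
    and a: "\<And>j. a j \<le> 2" and c: "c 1 + c 2 < c 0" "c 2 < c 1" "0 < c 2"
    and A: "A \<le> 2"
  shows "f A = g A"
proof -
  have "(\<Sum>B\<le>2. if f B = r then c B else 0) = (\<Sum>B\<le>2. if g B = r then c B else 0)" for r
  proof -
    have "card {j. j < n \<and> f (a j) = r} = card {j. j < n \<and> g (a j) = r}"
      using arg_cong[OF M, of "\<lambda>M. count M r"] unfolding count_mset_map_upt .
    then show ?thesis
      unfolding c_def
      by (simp only: card_level_set_split[OF a, where f = f] card_level_set_split[OF a, where f = g])
  qed
  then show ?thesis
    using superincreasing_subset_sums_eq[OF c, of "\<lambda>B. f B = f A" "\<lambda>B. g B = f A" A] A by simp
qed

lemma residues_determined_by_class_sizes:
  fixes F G :: "nat \<Rightarrow> nat \<Rightarrow> int" and a b :: "nat \<Rightarrow> nat" and n :: nat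
  defines "c \<equiv> \<lambda>A. card {j. j < n \<and> a j = A}"
  assumes M: "mset (map (\<lambda>j. F (a j) (b j)) [0..<n]) = mset (map (\<lambda>j. G (a j) (b j)) [0..<n])"
    and F: "\<And>A B. m dvd F A B - F A 0" and G: "\<And>A B. m dvd G A B - G A 0"
    and a: "\<And>j. a j \<le> 2" and c: "c 1 + c 2 < c 0" "c 2 < c 1" "0 < c 2"
    and A: "A \<le> 2"
  shows "m dvd F A 0 - G A 0"
proof -
  have residues:
    "map (\<lambda>j. F (a j) 0 mod m) [0..<n] = map (\<lambda>v. v mod m) (map (\<lambda>j. F (a j) (b j)) [0..<n])"
    "map (\<lambda>j. G (a j) 0 mod m) [0..<n] = map (\<lambda>v. v mod m) (map (\<lambda>j. G (a j) (b j)) [0..<n])"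
    using F G by (simp_all add: mod_eq_dvd_iff dvd_diff_commute[of m "F _ 0"] dvd_diff_commute[of m "G _ 0"])
  have "mset (map (\<lambda>j. F (a j) 0 mod m) [0..<n]) = mset (map (\<lambda>j. G (a j) 0 mod m) [0..<n])"
    by (simp only: residues mset_map[of "\<lambda>v. v mod m"] M)
  then have "F A 0 mod m = G A 0 mod m"
    by (rule values_determined_by_class_sizes[OF _ a c[unfolded c_def] A])
  then show ?thesis
    by (simp add: mod_eq_dvd_iff)
qed

lemma mset_eq_max_eq:
  fixes f g :: "nat \<Rightarrow> 'a :: linorder"
  assumes M: "mset (map f xs) = mset (map g xs)" and "x \<in> set xs"
    and "\<And>y. y \<in> set xs \<Longrightarrow> f y \<le> f x" "\<And>y. y \<in> set xs \<Longrightarrow> g y \<le> g x"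
  shows "f x = g x"
proof -
  have "f ` set xs = g ` set xs"
    using arg_cong[OF M, of set_mset] by simp
  then have "f x \<in> g ` set xs" "g x \<in> f ` set xs"
    using \<open>x \<in> set xs\<close> by auto
  then show ?thesis
    using assms(3,4) by (auto intro: order.antisym)
qed

lemma eigenvalue_form_residues_eq:
  fixes p q n :: nat and x1 x2 :: "nat \<Rightarrow> nat \<Rightarrow> int"
  assumes "3 \<le> p" "3 \<le> q" "p^2 dvd n" "q^2 dvd n" "n > 0"
    and spectra: "mset (map (\<lambda>j. eigenvalue_form p q x1 (capped_mult p j) (capped_mult q j)) [0..<n])
      = mset (map (\<lambda>j. eigenvalue_form p q x2 (capped_mult p j) (capped_mult q j)) [0..<n])"
    and "A \<le> 2"
  shows "int q dvd eigenvalue_form p q x1 A 0 - eigenvalue_form p q x2 A 0"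
    and "int p dvd eigenvalue_form p q x1 0 A - eigenvalue_form p q x2 0 A"
proof -
  show "int q dvd eigenvalue_form p q x1 A 0 - eigenvalue_form p q x2 A 0"
    by (rule residues_determined_by_class_sizes[where F = "eigenvalue_form p q x1"
          and G = "eigenvalue_form p q x2" and a = "capped_mult p", OF spectra
          eigenvalue_form_mod_right eigenvalue_form_mod_right capped_mult_le_2
          card_capped_mult_classes[OF assms(1,3,5)] \<open>A \<le> 2\<close>])
  show "int p dvd eigenvalue_form p q x1 0 A - eigenvalue_form p q x2 0 A"
    by (rule residues_determined_by_class_sizes[where F = "\<lambda>B A. eigenvalue_form p q x1 A B"
          and G = "\<lambda>B A. eigenvalue_form p q x2 A B" and a = "capped_mult q", OF spectra
          eigenvalue_form_mod_left eigenvalue_form_mod_left capped_mult_le_2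
          card_capped_mult_classes[OF assms(2,4,5)] \<open>A \<le> 2\<close>])
qed

lemma divisor_indicator_at:
  assumes "i \<le> 2" "k \<le> 2"
  shows "divisor_indicator p q D (2 - i) (2 - k) = 1 \<longleftrightarrow> p^i * q^k \<in> D"
  using assms by (simp add: divisor_indicator_def)

lemma divisor_indicator_inj:
  fixes p q :: nat
  assumes p: "prime p" and q: "prime q"
    and D: "D1 \<subseteq> divisors_of (p^2 * q^2)" "D2 \<subseteq> divisors_of (p^2 * q^2)"
    and eq: "divisor_indicator p q D1 = divisor_indicator p q D2"
  shows "D1 = D2"
proof -
  have "e \<in> D1 \<longleftrightarrow> e \<in> D2" if e: "e \<in> divisors_of (p^2 * q^2)" for e
  proof -
    obtain i k where "i \<le> 2" "k \<le> 2" "e = p^i * q^k"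
      using dvd_prime_squares[OF p q] e unfolding divisors_of_def by blast
    then show ?thesis
      using divisor_indicator_at[of i k p q] eq by metis
  qed
  then show ?thesis
    using D by blast
qed

lemma ICG_eigenvalues_eq_if_Spec_eq:
  fixes p q n :: nat
  assumes p: "prime p" and q: "prime q" and pq: "p \<noteq> q" and n: "n = p^2 * q^2"
    and D1: "D1 \<subseteq> divisors_of n - {n}" and D2: "D2 \<subseteq> divisors_of n - {n}"
    and Spec: "Spec (ICG_adj n D1) = Spec (ICG_adj n D2)"
  shows "mset (map (\<lambda>j. eigenvalue_form p q (divisor_indicator p q D1)
                            (capped_mult p j) (capped_mult q j)) [0..<n])
       = mset (map (\<lambda>j. eigenvalue_form p q (divisor_indicator p q D2)
                            (capped_mult p j) (capped_mult q j)) [0..<n])"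
proof -
  let ?L = "\<lambda>D. map (\<lambda>j. eigenvalue_form p q (divisor_indicator p q D)
                            (capped_mult p j) (capped_mult q j)) [0..<n]"
  have "inj (image_mset (of_int :: int \<Rightarrow> complex))"
    by (intro multiset.inj_map) (simp add: inj_def)
  moreover have "image_mset (of_int :: int \<Rightarrow> complex) (mset (?L D1)) = image_mset of_int (mset (?L D2))"
    using Spec unfolding Spec_ICG[OF p q pq n D1] Spec_ICG[OF p q pq n D2]
    by (simp add: multiset.map_comp comp_def)
  ultimately show ?thesis
    by (rule injD)
qed

theorem lemma3p27:
  fixes p q n :: nat and D1 D2 :: "nat set"
  assumes "prime p" "prime q" "3 \<le> p" "p < q"
    and "n = p^2 * q^2"
    and "D1 \<subseteq> divisors_of n - {n}" "D2 \<subseteq> divisors_of n - {n}"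
    and "1 \<in> D1" "1 \<in> D2"
    and "Spec (ICG_adj n D1) = Spec (ICG_adj n D2)"
  shows "D1 = D2"
proof -
  note p = assms(1) and q = assms(2) and n = assms(5) and D = assms(6,7)
  have pq: "p \<noteq> q" and "3 \<le> q" and "n > 0" "p^2 dvd n" "q^2 dvd n"
    using assms(3,4) n p q prime_gt_0_nat by auto
  let ?E = "eigenvalue_form p q" and ?x1 = "divisor_indicator p q D1" and ?x2 = "divisor_indicator p q D2"
  define d where "d = (\<lambda>i k. ?x1 i k - ?x2 i k)"
  note spectra = ICG_eigenvalues_eq_if_Spec_eq[OF p q pq n D assms(10)]
  note residues = eigenvalue_form_residues_eq[OF assms(3) \<open>3 \<le> q\<close> \<open>p^2 dvd n\<close> \<open>q^2 dvd n\<close>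
      \<open>n > 0\<close> spectra, folded eigenvalue_form_diff, folded d_def]
  have "?E ?x1 2 2 = ?E ?x2 2 2"
    using mset_eq_max_eq[OF spectra, of 0] \<open>n > 0\<close> ICG_eigenvalue_le_degree[OF p q pq] by simp
  then have top: "?E d 2 2 = 0"
    unfolding d_def eigenvalue_form_diff by simp
  have bounded: "\<bar>d i k\<bar> \<le> 1" and vanish: "2 < i \<or> 2 < k \<Longrightarrow> d i k = 0" for i k
    by (auto simp: d_def divisor_indicator_def)
  have corners: "d 0 0 = 0" "d 2 2 = 0"
    using D assms(8,9) n by (auto simp: d_def divisor_indicator_def)
  have "d i k = 0" for i k
    by (rule eigenvalue_form_kernel[OF p q assms(3,4) bounded vanish corners residues top])
  then have "?x1 = ?x2"
    by (simp add: d_def fun_eq_iff)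
  then show ?thesis
    using D n by (intro divisor_indicator_inj[OF p q]) auto
qed

end
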